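(* Let $n\ge2$. If ${\rm Comp}(\mathbb{Z}_n)\subseteq\{0,1,2,3\}$ and $p$ is an odd prime, then $n$ is not divisible by $p^3$.
   Context: $\mathbb{Z}_n$ is the cyclic group of integers modulo $n$. A skew morphism of a finite group $G$ is a permutation $\varphi$ of $G$ fixing the identity such that for each $a\in G$ there is a non-negative integer $i_a$ with $\varphi(ab)=\varphi(a)\varphi^{i_a}(b)$ for all $b\in G$. ${\rm ord}(\varphi)$ is the order of $\langle\varphi\rangle$. If $\varphi$ is non-trivial, $\pi_\varphi(a)$ is the unique such $i_a\in\{1,\dots,{\rm ord}(\varphi)-1\}$; if $\varphi$ is the identity, $\pi_\varphi(a)=1$. Let $\sigma_\varphi(x,y)=\sum_{i=0}^{x-1}\pi_\varphi(\varphi^i(y))\in\mathbb{Z}_{{\rm ord}(\varphi)}$. The derived skew morphism $\varphi'$ of a skew morphism $\varphi$ of $\mathbb{Z}_n$ is the skew morphism of $\mathbb{Z}_{{\rm ord}(\varphi)}$ given by $\varphi'(a)=\sigma_\varphi(a,1)$. Set $\varphi^{(0)}=\varphi$, $\varphi^{(i+1)}=(\varphi^{(i)})'$. For $n\ge 2$ the complexity of $\varphi$ is the unique non-negative integer $c$ such that $\varphi^{(c)}$ is a skew morphism of a non-trivial cyclic group and $\varphi^{(c+1)}$ is a skew morphism of $\mathbb{Z}_1$. ${\rm Comp}(\mathbb{Z}_n)$ denotes the set of complexities of all skew morphisms of $\mathbb{Z}_n$. *)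

theory Defs
  imports "HOL-Computational_Algebra.Primes"
begin

text \<open>Z_n is represented by the carrier {0..<n} with addition modulo n;
  a permutation of Z_n is a function nat => nat considered on {0..<n}.\<close>

definition skew_morphism :: "nat \<Rightarrow> (nat \<Rightarrow> nat) \<Rightarrow> bool" where
  "skew_morphism n \<phi> \<longleftrightarrow>
     bij_betw \<phi> {0..<n} {0..<n} \<and> \<phi> 0 = 0 \<and>
     (\<forall>a<n. \<exists>i::nat. \<forall>b<n. \<phi> ((a + b) mod n) = (\<phi> a + (\<phi> ^^ i) b) mod n)"

definition skew_ord :: "nat \<Rightarrow> (nat \<Rightarrow> nat) \<Rightarrow> nat" where
  "skew_ord n \<phi> = (LEAST k. 0 < k \<and> (\<forall>x<n. (\<phi> ^^ k) x = x))"

definition skew_pi :: "nat \<Rightarrow> (nat \<Rightarrow> nat) \<Rightarrow> nat \<Rightarrow> nat" where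
  "skew_pi n \<phi> a =
     (if skew_ord n \<phi> = 1 then 1
      else (THE i. 1 \<le> i \<and> i < skew_ord n \<phi> \<and>
              (\<forall>b<n. \<phi> ((a + b) mod n) = (\<phi> a + (\<phi> ^^ i) b) mod n)))"

definition skew_sigma :: "nat \<Rightarrow> (nat \<Rightarrow> nat) \<Rightarrow> nat \<Rightarrow> nat \<Rightarrow> nat" where
  "skew_sigma n \<phi> x y = (\<Sum>i<x. skew_pi n \<phi> ((\<phi> ^^ i) y)) mod skew_ord n \<phi>"

text \<open>derived skew morphism: a map on Z_{ord phi}; paired with its modulus\<close>
definition derived :: "nat \<times> (nat \<Rightarrow> nat) \<Rightarrow> nat \<times> (nat \<Rightarrow> nat)" where
  "derived p = (case p of (n, \<phi>) \<Rightarrow>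
     (skew_ord n \<phi>, \<lambda>a. skew_sigma n \<phi> a (1 mod n)))"

definition skew_complexity :: "nat \<Rightarrow> (nat \<Rightarrow> nat) \<Rightarrow> nat" where
  "skew_complexity n \<phi> =
     (THE c. 2 \<le> fst ((derived ^^ c) (n, \<phi>)) \<and> fst ((derived ^^ Suc c) (n, \<phi>)) = 1)"

definition Comp :: "nat \<Rightarrow> nat set" where
  "Comp n = {skew_complexity n \<phi> | \<phi>. skew_morphism n \<phi>}"

end

theory Submission
  imports Defs "HOL-Library.FuncSet" "HOL-Number_Theory.Cong"
begin

(* Let p be an odd prime with p^e exactly dividing n = p^e M, and let u = 1 + pW with M | W and
   p not dividing W.  The sums E(k) = 1 + u + ... + u^(k-1) satisfy E(a + b) = E(a) + u^a E(b),
   and by lifting the exponent p^s divides E(k) exactly when p^s divides k; so E permutes Z_n.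
   Transporting multiplication by -u along E gives a skew morphism phi of Z_n whose power function
   is pi(a) = 1 + (a - phi(a)) (p^(e-1) + 1).  The points at which all powers of phi are additive
   form p^(e-1) Z_n, hence ord(phi') = p^(e-1), and the second derived skew morphism is phi
   reduced modulo p^(e-1): the member of the same family on Z_(p^(e-1)), with M = 1 and the same W.
   By induction on e, phi has complexity 2e - 1, which exceeds 3 once e >= 3. *)

lemma funpow_mult_fixes:
  assumes "\<And>x. x < n \<Longrightarrow> (f ^^ k) x = x" and "x < n"
  shows "(f ^^ (q * k)) x = x"
  by (induction q) (simp_all add: funpow_add assms)

lemma add_mod_left_cancel_less:
  fixes c x y n :: nat
  assumes "(c + x) mod n = (c + y) mod n" and "x < n" and "y < n"
  shows "x = y"
  using assms cong_add_lcancel_nat[of c x y n] by (simp add: cong_def)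

lemma bij_betw_funpow_periodic:
  fixes f :: "nat \<Rightarrow> nat"
  assumes bij: "bij_betw f {0..<n} {0..<n}"
  shows "\<exists>k>0. \<forall>x<n. (f ^^ k) x = x"
proof -
  define F where "F k = restrict (f ^^ k) {0..<n}" for k
  have maps: "(f ^^ k) x < n" if "x < n" for k x
    using bij_betwE[OF bij_betw_funpow[OF bij]] that by auto
  have "range F \<subseteq> {0..<n} \<rightarrow>\<^sub>E {0..<n}"
    using maps by (auto simp: F_def)
  then have "finite (range F)"
    by (rule finite_subset) (auto intro: finite_PiE)
  then have "\<not> inj F"
    using finite_imageD infinite_UNIV_nat by blast
  then obtain i j where "i < j" "F i = F j"
    unfolding inj_def by (metis linorder_neqE_nat)
  then have eq: "(f ^^ i) x = (f ^^ j) x" if "x < n" for x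
  proof -
    have "F i x = F j x" using \<open>F i = F j\<close> by simp
    then show ?thesis using that by (simp add: F_def)
  qed
  have "(f ^^ (j - i)) x = x" if x: "x < n" for x
  proof -
    have "(f ^^ i) ((f ^^ (j - i)) x) = (f ^^ (i + (j - i))) x"
      by (simp add: funpow_add)
    also have "\<dots> = (f ^^ i) x"
      using eq x \<open>i < j\<close> by simp
    finally have "(f ^^ i) ((f ^^ (j - i)) x) = (f ^^ i) x" .
    then show ?thesis
      using inj_onD[OF bij_betw_imp_inj_on[OF bij_betw_funpow[OF bij]]] maps x by auto
  qed
  then show ?thesis using \<open>i < j\<close> by (intro exI[of _ "j - i"]) auto
qed

definition skew_power :: "nat \<Rightarrow> (nat \<Rightarrow> nat) \<Rightarrow> nat \<Rightarrow> nat \<Rightarrow> bool" where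
  "skew_power n f a i \<longleftrightarrow> (\<forall>b<n. f ((a + b) mod n) = (f a + (f ^^ i) b) mod n)"

lemma skew_powerD:
  "skew_power n f a i \<Longrightarrow> b < n \<Longrightarrow> f ((a + b) mod n) = (f a + (f ^^ i) b) mod n"
  unfolding skew_power_def by blast

locale periodic_map =
  fixes n :: nat and f :: "nat \<Rightarrow> nat"
  assumes maps: "\<And>x. x < n \<Longrightarrow> f x < n"
    and periodic: "\<exists>k>0. \<forall>x<n. (f ^^ k) x = x"
begin

lemma funpow_less: "x < n \<Longrightarrow> (f ^^ k) x < n"
  by (induction k) (auto simp: maps)

lemma skew_ord_pos_fixes: "0 < skew_ord n f \<and> (\<forall>x<n. (f ^^ skew_ord n f) x = x)"
  unfolding skew_ord_def by (rule LeastI_ex) (rule periodic)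

lemma skew_ord_pos: "0 < skew_ord n f"
  using skew_ord_pos_fixes by blast

lemma funpow_skew_ord: "x < n \<Longrightarrow> (f ^^ skew_ord n f) x = x"
  using skew_ord_pos_fixes by blast

lemma funpow_mod_skew_ord:
  assumes "x < n" shows "(f ^^ (k mod skew_ord n f)) x = (f ^^ k) x"
proof -
  let ?m = "skew_ord n f"
  have "(f ^^ k) x = (f ^^ (k mod ?m + k div ?m * ?m)) x"
    by (simp only: mod_div_mult_eq)
  also have "\<dots> = (f ^^ (k mod ?m)) x"
    by (simp only: funpow_add comp_apply funpow_mult_fixes[OF funpow_skew_ord assms])
  finally show ?thesis ..
qed

lemma funpow_fixes_iff_dvd: "(\<forall>x<n. (f ^^ k) x = x) \<longleftrightarrow> skew_ord n f dvd k"
proof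
  assume fix_k: "\<forall>x<n. (f ^^ k) x = x"
  have "\<not> (0 < k mod skew_ord n f)"
  proof
    assume "0 < k mod skew_ord n f"
    moreover have "\<forall>x<n. (f ^^ (k mod skew_ord n f)) x = x"
      using fix_k funpow_mod_skew_ord by simp
    ultimately have "skew_ord n f \<le> k mod skew_ord n f"
      unfolding skew_ord_def by (intro Least_le) blast
    then show False using mod_less_divisor[OF skew_ord_pos, of k] by linarith
  qed
  then show "skew_ord n f dvd k" by (simp add: dvd_eq_mod_eq_0)
next
  assume "skew_ord n f dvd k"
  then show "\<forall>x<n. (f ^^ k) x = x"
    using funpow_mult_fixes[OF funpow_skew_ord] by (auto elim!: dvdE simp: mult.commute)
qed

lemma funpow_eq_iff_mod:
  "(\<forall>x<n. (f ^^ a) x = (f ^^ b) x) \<longleftrightarrow> a mod skew_ord n f = b mod skew_ord n f"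
proof -
  let ?m = "skew_ord n f"
  have dvd_diff: "?m dvd b - a" if eq: "\<forall>x<n. (f ^^ a) x = (f ^^ b) x" and "a \<le> b" for a b
  proof -
    \<comment> \<open>composing with \<open>f ^^ ((?m - 1) * a)\<close> turns \<open>f ^^ a\<close> into the identity\<close>
    have "(f ^^ (b - a)) x = x" if x: "x < n" for x
    proof -
      have "a + (?m - 1) * a = a * ?m"
        using skew_ord_pos by (cases ?m) auto
      then have inv: "(f ^^ (a + (?m - 1) * a)) x = x"
        using funpow_mult_fixes[OF funpow_skew_ord x, of a] by simp
      have split: "b + (?m - 1) * a = (b - a) + (a + (?m - 1) * a)"
        using \<open>a \<le> b\<close> by simp
      have "(f ^^ (b - a)) x = (f ^^ (b - a)) ((f ^^ (a + (?m - 1) * a)) x)"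
        using inv by simp
      also have "\<dots> = (f ^^ (b + (?m - 1) * a)) x"
        by (simp only: split funpow_add comp_apply)
      also have "\<dots> = (f ^^ (a + (?m - 1) * a)) x"
        using eq funpow_less x by (simp add: funpow_add)
      finally show ?thesis using inv by simp
    qed
    then show ?thesis using funpow_fixes_iff_dvd by blast
  qed
  show ?thesis
  proof
    assume "\<forall>x<n. (f ^^ a) x = (f ^^ b) x"
    then show "a mod ?m = b mod ?m"
      using dvd_diff[of a b] dvd_diff[of b a] mod_eq_dvd_iff_nat by (metis nle_le)
  next
    assume "a mod ?m = b mod ?m"
    then show "\<forall>x<n. (f ^^ a) x = (f ^^ b) x"
      using funpow_mod_skew_ord[of _ a] funpow_mod_skew_ord[of _ b] by simp
  qed
qed

lemma funpow_cong_mod: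
  "a mod skew_ord n f = b mod skew_ord n f \<Longrightarrow> x < n \<Longrightarrow> (f ^^ a) x = (f ^^ b) x"
  using funpow_eq_iff_mod by blast

lemma skew_power_mod_iff:
  assumes "skew_power n f a i" and "a < n"
  shows "skew_power n f a j \<longleftrightarrow> i mod skew_ord n f = j mod skew_ord n f"
proof -
  have "skew_power n f a j \<longleftrightarrow> (\<forall>b<n. (f ^^ i) b = (f ^^ j) b)"
    using assms(1) add_mod_left_cancel_less[of "f a" _ n] funpow_less
    unfolding skew_power_def by (metis (no_types, lifting))
  then show ?thesis using funpow_eq_iff_mod by blast
qed

lemma skew_power_zero_imp_id:
  assumes "skew_power n f a 0" and "a < n" and "f 0 = 0" and "x < n"
  shows "f x = x"
proof -
  have shift: "f ((a + b) mod n) = (f a + b) mod n" if "b < n" for b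
    using assms(1) that unfolding skew_power_def by simp
  have "(f a + (n - a) mod n) mod n = (a + (n - a) mod n) mod n"
    using shift[of "(n - a) mod n"] assms(2,3) by (simp add: mod_add_right_eq)
  then have "f a = a"
    using add_mod_left_cancel_less[of "(n - a) mod n" "f a" n a] maps assms(2) by (simp add: add.commute)
  moreover have "(a + (x + (n - a)) mod n) mod n = x"
    using assms(2,4) by (simp add: mod_add_right_eq)
  ultimately show ?thesis
    using shift[of "(x + (n - a)) mod n"] assms(2) by simp
qed

lemma skew_pi_correct:
  assumes "skew_power n f a i" and "a < n" and "f 0 = 0"
  shows "skew_power n f a (skew_pi n f a)" and "skew_pi n f a mod skew_ord n f = i mod skew_ord n f"
proof -
  have "skew_power n f a (skew_pi n f a) \<and> skew_pi n f a mod skew_ord n f = i mod skew_ord n f"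
  proof (cases "skew_ord n f = 1")
    case True
    then show ?thesis using skew_power_mod_iff[OF assms(1,2)] unfolding skew_pi_def by simp
  next
    case False
    define c where "c = i mod skew_ord n f"
    have c: "skew_power n f a c" "c < skew_ord n f"
      using skew_power_mod_iff[OF assms(1,2)] skew_ord_pos by (simp_all add: c_def)
    have "c \<noteq> 0"
    proof
      assume "c = 0"
      then have "\<forall>x<n. (f ^^ 1) x = x"
        using skew_power_zero_imp_id c assms(2,3) by simp
      then show False using False funpow_fixes_iff_dvd[of 1] by simp
    qed
    have "(THE j. 1 \<le> j \<and> j < skew_ord n f \<and> skew_power n f a j) = c"
    proof (rule the_equality)
      fix j assume "1 \<le> j \<and> j < skew_ord n f \<and> skew_power n f a j"
      then show "j = c"
        using skew_power_mod_iff[OF c(1) assms(2)] c(2) by simp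
    qed (use c \<open>c \<noteq> 0\<close> in simp)
    then have "skew_pi n f a = c" unfolding skew_pi_def skew_power_def using False by simp
    then show ?thesis using c c_def by simp
  qed
  then show "skew_power n f a (skew_pi n f a)" "skew_pi n f a mod skew_ord n f = i mod skew_ord n f"
    by auto
qed

end

definition pi_sum :: "nat \<Rightarrow> (nat \<Rightarrow> nat) \<Rightarrow> nat \<Rightarrow> nat \<Rightarrow> nat" where
  "pi_sum n f j a = (\<Sum>i<j. skew_pi n f ((f ^^ i) a))"

lemma derived_apply: "derived (n, f) = (skew_ord n f, \<lambda>x. skew_sigma n f x (1 mod n))"
  by (simp only: derived_def prod.case)

locale nontrivial_skew =
  fixes n :: nat and \<phi> :: "nat \<Rightarrow> nat"
  assumes two_le_n: "2 \<le> n" and skew: "skew_morphism n \<phi>" and ord_neq_1: "skew_ord n \<phi> \<noteq> 1"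
begin

abbreviation "m \<equiv> skew_ord n \<phi>"
abbreviation "\<pi> \<equiv> skew_pi n \<phi>"
abbreviation "\<sigma> \<equiv> pi_sum n \<phi>"

lemma phi_zero: "\<phi> 0 = 0"
  using skew unfolding skew_morphism_def by blast

sublocale periodic_map n \<phi>
proof
  have bij: "bij_betw \<phi> {0..<n} {0..<n}"
    using skew unfolding skew_morphism_def by blast
  then show "\<And>x. x < n \<Longrightarrow> \<phi> x < n"
    using bij_betwE by fastforce
  show "\<exists>k>0. \<forall>x<n. (\<phi> ^^ k) x = x"
    using bij_betw_funpow_periodic[OF bij] .
qed

lemma two_le_m: "2 \<le> m"
  using skew_ord_pos ord_neq_1 by linarith

lemma skew_power_pi:
  assumes "a < n" shows "skew_power n \<phi> a (\<pi> a)"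
proof -
  obtain i where "skew_power n \<phi> a i"
    using skew assms unfolding skew_morphism_def skew_power_def by blast
  then show ?thesis using skew_pi_correct(1) assms phi_zero by blast
qed

lemma phi_add_mod: "a < n \<Longrightarrow> b < n \<Longrightarrow> \<phi> ((a + b) mod n) = (\<phi> a + (\<phi> ^^ \<pi> a) b) mod n"
  using skew_powerD[OF skew_power_pi] .

lemma pi_mod_ord: "a < n \<Longrightarrow> skew_power n \<phi> a i \<Longrightarrow> \<pi> a mod m = i mod m"
  using skew_pi_correct(2) phi_zero by simp

lemma pi_sum_Suc: "\<sigma> (Suc j) a = \<sigma> j a + \<pi> ((\<phi> ^^ j) a)"
  unfolding pi_sum_def by simp

lemma pi_sum_add: "\<sigma> (x + y) b = \<sigma> x b + \<sigma> y ((\<phi> ^^ x) b)"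
  by (induction y) (simp_all add: pi_sum_def funpow_add add.commute)

lemma funpow_add_mod:
  assumes "a < n" and "b < n"
  shows "(\<phi> ^^ j) ((a + b) mod n) = ((\<phi> ^^ j) a + (\<phi> ^^ \<sigma> j a) b) mod n"
proof (induction j)
  case 0
  then show ?case using assms by (simp add: pi_sum_def)
next
  case (Suc j)
  have "(\<phi> ^^ Suc j) ((a + b) mod n) = \<phi> (((\<phi> ^^ j) a + (\<phi> ^^ \<sigma> j a) b) mod n)"
    using Suc by simp
  also have "\<dots> = (\<phi> ((\<phi> ^^ j) a) + (\<phi> ^^ \<pi> ((\<phi> ^^ j) a)) ((\<phi> ^^ \<sigma> j a) b)) mod n"
    using phi_add_mod[OF funpow_less[OF assms(1)] funpow_less[OF assms(2)]] by simp
  also have "(\<phi> ^^ \<pi> ((\<phi> ^^ j) a)) ((\<phi> ^^ \<sigma> j a) b) = (\<phi> ^^ (\<pi> ((\<phi> ^^ j) a) + \<sigma> j a)) b"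
    by (simp add: funpow_add)
  also have "\<pi> ((\<phi> ^^ j) a) + \<sigma> j a = \<sigma> (Suc j) a"
    by (simp add: pi_sum_Suc)
  finally show ?case by simp
qed

lemma ord_dvd_pi_sum_ord:
  assumes "b < n" shows "m dvd \<sigma> m b"
proof -
  have "(\<phi> ^^ \<sigma> m b) c = c" if c: "c < n" for c
  proof -
    have "(b + (\<phi> ^^ \<sigma> m b) c) mod n = (b + c) mod n"
      using funpow_add_mod[OF assms c, of m] funpow_skew_ord assms two_le_n by simp
    then show ?thesis
      using add_mod_left_cancel_less funpow_less c by blast
  qed
  then show ?thesis using funpow_fixes_iff_dvd by blast
qed

lemma ord_dvd_pi_sum_mult_ord: "b < n \<Longrightarrow> m dvd \<sigma> (q * m) b"
proof (induction q)
  case (Suc q)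
  have "\<sigma> (Suc q * m) b = \<sigma> m b + \<sigma> (q * m) b"
    using pi_sum_add[of m "q * m" b] funpow_skew_ord Suc.prems by (simp add: add.commute)
  then show ?case using Suc ord_dvd_pi_sum_ord by simp
qed (simp add: pi_sum_def)

lemma pi_sum_mod_ord: "b < n \<Longrightarrow> \<sigma> (x mod m) b mod m = \<sigma> x b mod m"
proof -
  assume b: "b < n"
  have "\<sigma> x b = \<sigma> (x div m * m + x mod m) b"
    by (simp only: div_mult_mod_eq)
  also have "\<dots> = \<sigma> (x div m * m) b + \<sigma> (x mod m) b"
    using pi_sum_add funpow_mult_fixes[OF funpow_skew_ord b] by simp
  finally have "\<sigma> x b = \<sigma> (x div m * m) b + \<sigma> (x mod m) b" .
  moreover have "\<sigma> (x div m * m) b mod m = 0"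
    using ord_dvd_pi_sum_mult_ord[OF b] by simp
  ultimately show ?thesis by (metis add_0 mod_add_left_eq)
qed

lemma pi_add_mod:
  assumes a: "a < n" and b: "b < n"
  shows "\<pi> ((a + b) mod n) mod m = \<sigma> (\<pi> a) b mod m"
proof -
  have "(\<phi> ^^ \<pi> ((a + b) mod n)) c = (\<phi> ^^ \<sigma> (\<pi> a) b) c" if c: "c < n" for c
  proof -
    define ab where "ab = (a + b) mod n"
    have "ab < n" "(b + c) mod n < n" using two_le_n by (simp_all add: ab_def)
    have "((\<phi> a + (\<phi> ^^ \<pi> a) b) + (\<phi> ^^ \<pi> ab) c) mod n = (\<phi> ab + (\<phi> ^^ \<pi> ab) c) mod n"
      using phi_add_mod[OF a b] unfolding ab_def by (simp add: mod_add_left_eq)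
    also have "\<dots> = \<phi> ((ab + c) mod n)"
      using phi_add_mod[OF \<open>ab < n\<close> c] by simp
    also have "(ab + c) mod n = (a + (b + c) mod n) mod n"
      unfolding ab_def by (simp add: mod_add_left_eq mod_add_right_eq add.assoc)
    also have "\<phi> \<dots> = (\<phi> a + (\<phi> ^^ \<pi> a) ((b + c) mod n)) mod n"
      using phi_add_mod[OF a \<open>(b + c) mod n < n\<close>] by simp
    also have "\<dots> = ((\<phi> a + (\<phi> ^^ \<pi> a) b) + (\<phi> ^^ \<sigma> (\<pi> a) b) c) mod n"
      using funpow_add_mod[OF b c] by (simp add: mod_add_right_eq add.assoc)
    finally show ?thesis
      using add_mod_left_cancel_less funpow_less c unfolding ab_def by blast
  qed
  then show ?thesis using funpow_eq_iff_mod by blast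
qed

lemma pi_sum_add_point:
  assumes a: "a < n" and b: "b < n"
  shows "\<sigma> j ((a + b) mod n) mod m = \<sigma> (\<sigma> j a) b mod m"
proof (induction j)
  case (Suc j)
  define a' where "a' = (\<phi> ^^ j) a"
  define b' where "b' = (\<phi> ^^ \<sigma> j a) b"
  have "a' < n" "b' < n" using funpow_less a b by (simp_all add: a'_def b'_def)
  have "\<sigma> (Suc j) ((a + b) mod n) mod m = (\<sigma> j ((a + b) mod n) + \<pi> ((a' + b') mod n)) mod m"
    using funpow_add_mod[OF a b] by (simp add: pi_sum_Suc a'_def b'_def)
  also have "\<dots> = (\<sigma> (\<sigma> j a) b + \<sigma> (\<pi> a') b') mod m"
    using Suc pi_add_mod[OF \<open>a' < n\<close> \<open>b' < n\<close>] mod_add_eq by metis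
  also have "\<sigma> (\<sigma> j a) b + \<sigma> (\<pi> a') b' = \<sigma> (\<sigma> (Suc j) a) b"
    using pi_sum_add[of "\<sigma> j a" "\<pi> a'" b] by (simp add: pi_sum_Suc a'_def b'_def)
  finally show ?case .
qed (simp add: pi_sum_def)

lemma pi_sum_zero_mod: "\<sigma> j 0 mod m = j mod m"
proof -
  have "(\<phi> ^^ i) 0 = 0" for i
    by (induction i) (simp_all add: phi_zero)
  then have "\<sigma> j 0 mod m = j * (\<pi> 0 mod m) mod m"
    unfolding pi_sum_def by (simp add: mod_mult_right_eq)
  also have "\<pi> 0 mod m = 1 mod m"
    using pi_mod_ord[of 0 1] maps two_le_n by (simp add: skew_power_def phi_zero)
  finally show ?thesis by (simp add: mod_mult_right_eq)
qed

text \<open>\<open>\<psi>\<close> is the derived skew morphism \<open>\<phi>'\<close> (as \<open>1 mod n = 1\<close>), and \<open>m'\<close> below is its order.\<close>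

abbreviation "\<psi> \<equiv> \<lambda>a. skew_sigma n \<phi> a 1"

lemma psi_eq: "\<psi> a = \<sigma> a 1 mod m"
  unfolding skew_sigma_def pi_sum_def by simp

lemma funpow_psi: "j < m \<Longrightarrow> (\<psi> ^^ k) j = \<sigma> j (k mod n) mod m"
proof (induction k)
  case (Suc k)
  have "(\<psi> ^^ Suc k) j = \<sigma> (\<sigma> j (k mod n) mod m) 1 mod m"
    using Suc by (simp only: funpow.simps(2) comp_apply psi_eq)
  also have "\<dots> = \<sigma> (\<sigma> j (k mod n)) 1 mod m"
    using pi_sum_mod_ord two_le_n by simp
  also have "\<dots> = \<sigma> j ((k mod n + 1) mod n) mod m"
    using pi_sum_add_point[of "k mod n" 1 j] two_le_n by simp
  finally show ?case by (simp add: mod_Suc_eq)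
qed (use pi_sum_zero_mod in simp)

sublocale psi: periodic_map m \<psi>
proof
  show "\<And>x. x < m \<Longrightarrow> \<psi> x < m"
    using psi_eq skew_ord_pos by simp
  show "\<exists>k>0. \<forall>x<m. (\<psi> ^^ k) x = x"
    using funpow_psi[of _ n] pi_sum_zero_mod two_le_n by (intro exI[of _ n]) auto
qed

abbreviation "m' \<equiv> skew_ord m \<psi>"

definition powers_additive_at :: "nat \<Rightarrow> bool" where
  "powers_additive_at k \<longleftrightarrow>
    (\<forall>j<m. \<forall>b<n. (\<phi> ^^ j) ((k + b) mod n) = ((\<phi> ^^ j) k + (\<phi> ^^ j) b) mod n)"

lemma funpow_psi_fixes_iff_powers_additive_at:
  "(\<forall>j<m. (\<psi> ^^ k) j = j) \<longleftrightarrow> powers_additive_at (k mod n)"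
proof -
  define r where "r = k mod n"
  have "r < n" using two_le_n by (simp add: r_def)
  have "(\<psi> ^^ k) j = j \<longleftrightarrow>
      (\<forall>b<n. (\<phi> ^^ j) ((r + b) mod n) = ((\<phi> ^^ j) r + (\<phi> ^^ j) b) mod n)"
    if j: "j < m" for j
  proof -
    have "(\<psi> ^^ k) j = j \<longleftrightarrow> (\<forall>b<n. (\<phi> ^^ \<sigma> j r) b = (\<phi> ^^ j) b)"
      using funpow_psi[OF j] funpow_eq_iff_mod[of "\<sigma> j r" j] j by (simp add: r_def)
    moreover have "(\<phi> ^^ \<sigma> j r) b = (\<phi> ^^ j) b \<longleftrightarrow>
        (\<phi> ^^ j) ((r + b) mod n) = ((\<phi> ^^ j) r + (\<phi> ^^ j) b) mod n" if b: "b < n" for b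
    proof -
      have "(\<phi> ^^ j) ((r + b) mod n) = ((\<phi> ^^ j) r + (\<phi> ^^ \<sigma> j r) b) mod n"
        using funpow_add_mod[OF \<open>r < n\<close> b] .
      then show ?thesis
        using add_mod_left_cancel_less[of "(\<phi> ^^ j) r" "(\<phi> ^^ \<sigma> j r) b" n "(\<phi> ^^ j) b"]
          funpow_less[OF b] by auto
    qed
    ultimately show ?thesis by blast
  qed
  then show ?thesis unfolding powers_additive_at_def r_def by simp
qed

lemma skew_power_psi:
  assumes "l < m" shows "skew_power m \<psi> l ((\<phi> ^^ l) 1)"
  unfolding skew_power_def
proof (intro allI impI)
  fix j assume j: "j < m"
  have "1 < n" using two_le_n by simp
  have "\<psi> ((l + j) mod m) = \<sigma> (l + j) 1 mod m"
    using psi_eq pi_sum_mod_ord[OF \<open>1 < n\<close>] by simp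
  also have "\<dots> = (\<sigma> l 1 mod m + \<sigma> j ((\<phi> ^^ l) 1) mod m) mod m"
    by (simp add: pi_sum_add mod_add_eq)
  also have "\<sigma> j ((\<phi> ^^ l) 1) mod m = (\<psi> ^^ (\<phi> ^^ l) 1) j"
    using funpow_psi[OF j] funpow_less[OF \<open>1 < n\<close>] by simp
  also have "\<sigma> l 1 mod m = \<psi> l"
    by (rule psi_eq[symmetric])
  finally show "\<psi> ((l + j) mod m) = (\<psi> l + (\<psi> ^^ (\<phi> ^^ l) 1) j) mod m" .
qed

lemma ord_psi_dvd_n: "m' dvd n"
proof -
  have "\<forall>j<m. (\<psi> ^^ n) j = j"
    using funpow_psi pi_sum_zero_mod by simp
  then show ?thesis using psi.funpow_fixes_iff_dvd by blast
qed

lemma sum_funpow_psi_mod: "(\<Sum>l<i. (\<phi> ^^ (\<psi> ^^ l) 1) 1) mod n = \<phi> (i mod n)"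
proof (induction i)
  case (Suc i)
  have "1 < n" "1 < m" "i mod n < n" using two_le_n two_le_m by simp_all
  have "(\<psi> ^^ i) 1 mod m = \<pi> (i mod n) mod m"
    using funpow_psi[OF \<open>1 < m\<close>] by (simp add: pi_sum_def)
  then have "(\<phi> ^^ (\<psi> ^^ i) 1) 1 = (\<phi> ^^ \<pi> (i mod n)) 1"
    using \<open>1 < n\<close> by (rule funpow_cong_mod)
  have "(\<Sum>l<Suc i. (\<phi> ^^ (\<psi> ^^ l) 1) 1) mod n
      = ((\<Sum>l<i. (\<phi> ^^ (\<psi> ^^ l) 1) 1) mod n + (\<phi> ^^ (\<psi> ^^ i) 1) 1) mod n"
    by (simp add: mod_add_left_eq)
  also have "\<dots> = (\<phi> (i mod n) + (\<phi> ^^ \<pi> (i mod n)) 1) mod n"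
    using Suc \<open>(\<phi> ^^ (\<psi> ^^ i) 1) 1 = (\<phi> ^^ \<pi> (i mod n)) 1\<close> by simp
  also have "\<dots> = \<phi> ((i mod n + 1) mod n)"
    using phi_add_mod[OF \<open>i mod n < n\<close> \<open>1 < n\<close>] by simp
  finally show ?case by (simp add: mod_Suc_eq)
qed (simp add: phi_zero)

lemma second_derived_apply:
  assumes i: "i < m'"
  shows "skew_sigma m \<psi> i (1 mod m) = \<phi> i mod m'"
proof -
  have "1 < m" using two_le_m by simp
  have pi_psi: "skew_pi m \<psi> ((\<psi> ^^ l) 1) mod m' = (\<phi> ^^ (\<psi> ^^ l) 1) 1 mod m'" for l
    using psi.skew_pi_correct(2)[OF skew_power_psi] psi.funpow_less[OF \<open>1 < m\<close>]
    by (simp add: skew_sigma_def)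
  have "skew_sigma m \<psi> i (1 mod m) = (\<Sum>l<i. skew_pi m \<psi> ((\<psi> ^^ l) 1) mod m') mod m'"
    unfolding skew_sigma_def using \<open>1 < m\<close> by (simp add: mod_sum_eq)
  also have "\<dots> = ((\<Sum>l<i. (\<phi> ^^ (\<psi> ^^ l) 1) 1) mod n) mod m'"
    unfolding pi_psi using ord_psi_dvd_n by (simp add: mod_sum_eq mod_mod_cancel)
  also have "\<dots> = \<phi> i mod m'"
    using sum_funpow_psi_mod i dvd_imp_le[OF ord_psi_dvd_n] two_le_n by simp
  finally show ?thesis .
qed

lemma derived_derived: "derived (derived (n, \<phi>)) = (m', \<lambda>i. skew_sigma m \<psi> i (1 mod m))"
  using two_le_n by (simp add: derived_apply)

end

lemma derived_cong:
  assumes fg: "\<And>x. x < k \<Longrightarrow> f x = g x" and g: "\<And>x. x < k \<Longrightarrow> g x < k" and "0 < k"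
  shows "derived (k, f) = derived (k, g)"
proof -
  have funpow: "(f ^^ j) x = (g ^^ j) x \<and> (g ^^ j) x < k" if "x < k" for j x
    using that by (induction j) (simp_all add: fg g)
  have ord: "skew_ord k f = skew_ord k g"
    unfolding skew_ord_def using funpow by simp
  have pi: "skew_pi k f a = skew_pi k g a" if "a < k" for a
    unfolding skew_pi_def ord using fg funpow that \<open>0 < k\<close> by simp
  have "skew_sigma k f x y = skew_sigma k g x y" if "y < k" for x y
    unfolding skew_sigma_def ord using pi funpow that by simp
  then show ?thesis using \<open>0 < k\<close> ord by (simp add: derived_apply)
qed

lemma fst_funpow_derived_one: "h 0 = 0 \<Longrightarrow> fst ((derived ^^ c) (1, h)) = 1"
proof (induction c arbitrary: h)
  case (Suc c)
  have "(h ^^ k) 0 = 0" for k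
    by (induction k) (simp_all add: Suc.prems)
  then have "skew_ord 1 h = 1"
    unfolding skew_ord_def using Suc.prems by (intro Least_equality) auto
  then have "(derived ^^ Suc c) (1, h) = (derived ^^ c) (1, \<lambda>x. skew_sigma 1 h x 0)"
    by (simp only: funpow_Suc_right comp_apply derived_apply mod_self)
  then show ?case
    using Suc.IH[of "\<lambda>x. skew_sigma 1 h x 0"] by (simp add: skew_sigma_def)
qed simp

definition geom_sum :: "nat \<Rightarrow> nat \<Rightarrow> nat" where
  "geom_sum u k = (\<Sum>i<k. u ^ i)"

lemma geom_sum_0 [simp]: "geom_sum u 0 = 0"
  by (simp add: geom_sum_def)

lemma geom_sum_add: "geom_sum u (a + b) = geom_sum u a + u ^ a * geom_sum u b"
  by (induction b) (simp_all add: geom_sum_def power_add algebra_simps)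

lemma geom_sum_mult: "geom_sum u (y * q) = geom_sum u y * geom_sum (u ^ y) q"
proof (induction q)
  case (Suc q)
  have "geom_sum u (y * Suc q) = geom_sum u (y * q) + u ^ (y * q) * geom_sum u y"
    using geom_sum_add[of u "y * q" y] by (simp add: add.commute)
  also have "\<dots> = geom_sum u y * (geom_sum (u ^ y) q + (u ^ y) ^ q)"
    unfolding Suc power_mult by (simp add: algebra_simps)
  finally show ?case by (simp add: geom_sum_def)
qed (simp add: geom_sum_def)

lemma one_plus_power_eq: "(1 + d) ^ k = 1 + d * geom_sum (1 + d) k"
  by (induction k) (simp_all add: geom_sum_def algebra_simps)

lemma geom_sum_mod:
  assumes "q dvd d" shows "geom_sum (1 + d) k mod q = k mod q"
proof -
  have "[1 + d = 1 + 0] (mod q)"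
    using assms by (intro cong_add) (simp_all add: cong_0_iff)
  then have "[(1 + d) ^ i = 1] (mod q)" for i
    using cong_pow by fastforce
  then have "[geom_sum (1 + d) k = (\<Sum>i<k. 1)] (mod q)"
    unfolding geom_sum_def by (intro cong_sum) simp
  then show ?thesis by (simp add: cong_def)
qed

lemma one_plus_power_cong:
  assumes "p dvd d" shows "[(1 + d) ^ j = 1 + j * d] (mod p ^ 2)"
proof (induction j)
  case (Suc j)
  have "[(1 + d) ^ Suc j = (1 + j * d) * (1 + d)] (mod p ^ 2)"
    using cong_mult[OF Suc cong_refl, of "1 + d"] by (simp add: mult.commute)
  also have "(1 + j * d) * (1 + d) = (1 + Suc j * d) + j * (d * d)"
    by (simp add: algebra_simps)
  also have "[\<dots> = (1 + Suc j * d) + 0] (mod p ^ 2)"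
    using assms by (intro cong_add cong_refl) (simp add: cong_0_iff power2_eq_square mult_dvd_mono)
  finally show ?case by simp
qed simp

lemma geom_sum_cong_mod_square:
  assumes "odd p" and "p dvd d"
  shows "[geom_sum (1 + d) p = p] (mod p ^ 2)"
proof -
  obtain t where t: "d = p * t" using \<open>p dvd d\<close> by blast
  have "2 * (\<Sum>j<p. j) = p * (p - 1)"
    by (induction p) (auto simp: algebra_simps)
  moreover obtain h where h: "p = 2 * h + 1" using \<open>odd p\<close> oddE by blast
  ultimately have sum: "(\<Sum>j<p. j) = p * h" by simp
  have "[geom_sum (1 + d) p = (\<Sum>j<p. 1 + j * d)] (mod p ^ 2)"
    unfolding geom_sum_def by (rule cong_sum) (rule one_plus_power_cong[OF \<open>p dvd d\<close>])
  also have "(\<Sum>j<p. 1 + j * d) = p + (\<Sum>j<p. j) * d"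
    unfolding sum.distrib sum_distrib_right by simp
  also have "\<dots> = p + p ^ 2 * (t * h)"
    using sum t by (simp add: power2_eq_square algebra_simps)
  also have "[p + p ^ 2 * (t * h) = p] (mod p ^ 2)"
    by (simp add: cong_def)
  finally show ?thesis .
qed

lemma prime_power_Suc_dvd_mult_iff:
  fixes p :: nat
  assumes "prime p" and "\<not> p dvd t"
  shows "p ^ Suc s dvd x * (p * t) \<longleftrightarrow> p ^ s dvd x"
proof -
  have "p ^ Suc s dvd x * (p * t) \<longleftrightarrow> p ^ s dvd x * t"
    using assms(1) by (simp add: prime_gt_0_nat power_Suc2 mult.assoc mult.left_commute[of p])
  also have "\<dots> \<longleftrightarrow> p ^ s dvd x"
    using assms by (simp add: coprime_dvd_mult_left_iff prime_imp_coprime)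
  finally show ?thesis .
qed

lemma exact_dvd_of_cong_mod_square:
  fixes p x :: nat
  assumes "1 < p" and "[x = p] (mod p ^ 2)"
  obtains t where "x = p * t" and "\<not> p dvd t"
proof -
  have "[x = p] (mod p)"
    using assms(2) by (rule cong_dvd_modulus_nat) (simp add: power2_eq_square)
  then have "p dvd x"
    using cong_dvd_iff[OF \<open>[x = p] (mod p)\<close>] by simp
  then obtain t where t: "x = p * t" ..
  have "\<not> p dvd t"
  proof
    assume "p dvd t"
    then have "p ^ 2 dvd x" unfolding t by (simp add: power2_eq_square)
    then have "p ^ 2 dvd p" using cong_dvd_iff[OF assms(2)] by blast
    then show False
      using assms(1) dvd_imp_le[of "p ^ 2" p] by (simp add: power2_eq_square)
  qed
  then show ?thesis using t that by blast
qed

lemma prime_power_dvd_geom_sum_iff: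
  assumes p: "prime p" "odd p" and "p dvd d"
  shows "p ^ s dvd geom_sum (1 + d) k \<longleftrightarrow> p ^ s dvd k"
proof (induction s arbitrary: k)
  case (Suc s)
  have p_dvd: "p dvd geom_sum (1 + d) k \<longleftrightarrow> p dvd k"
    using geom_sum_mod[OF \<open>p dvd d\<close>] by (simp add: dvd_eq_mod_eq_0)
  show ?case
  proof (cases "p dvd k")
    case True
    then obtain y where "k = p * y" ..
    then have k: "k = y * p" by simp
    \<comment> \<open>the factor \<open>geom_sum ((1 + d) ^ y) p\<close> is divisible by \<open>p\<close> exactly once\<close>
    have "[geom_sum ((1 + d) ^ y) p = p] (mod p ^ 2)"
      unfolding one_plus_power_eq using geom_sum_cong_mod_square[OF p(2) dvd_mult2[OF \<open>p dvd d\<close>]] .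
    then obtain t where t: "geom_sum ((1 + d) ^ y) p = p * t" "\<not> p dvd t"
      using exact_dvd_of_cong_mod_square prime_gt_1_nat[OF p(1)] by blast
    have "p ^ Suc s dvd geom_sum (1 + d) k \<longleftrightarrow> p ^ s dvd geom_sum (1 + d) y"
      unfolding k geom_sum_mult t(1) using prime_power_Suc_dvd_mult_iff[OF p(1) t(2)] .
    also have "\<dots> \<longleftrightarrow> p ^ Suc s dvd k"
      unfolding k using Suc.IH p(1) by (simp add: prime_gt_0_nat power_Suc2)
    finally show ?thesis .
  next
    case False
    have "p dvd p ^ Suc s" by simp
    then show ?thesis using False p_dvd dvd_trans by blast
  qed
qed simp

locale geom_family =
  fixes p e M W :: nat
  assumes prime: "prime p" and odd: "odd p" and e_pos: "0 < e"
    and coprime_p_M: "coprime p M" and M_dvd_W: "M dvd W" and not_p_dvd_W: "\<not> p dvd W"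
begin

text \<open>\<open>g\<close> represents \<open>-u\<close> in \<open>\<int>\<^sub>N\<close>, and \<open>\<phi>\<close> is multiplication by \<open>g\<close> transported along the
  bijection \<open>k \<mapsto> geom_sum u k mod N\<close> of \<open>{0..<N}\<close> (\<open>bij_geom_sum_mod\<close> below).\<close>

definition "N = p ^ e * M"
definition "d = p * W"
definition "u = 1 + d"
definition "g = (N - 1) * u"
definition "\<phi> x = inv_into {0..<N} (\<lambda>k. geom_sum u k mod N) (g * geom_sum u x mod N)"

lemma three_le_p: "3 \<le> p"
  using prime_ge_2_nat[OF prime] odd by (cases "p = 2") auto

lemma three_le_N: "3 \<le> N"
proof -
  have "0 < M" using coprime_p_M prime by (cases M) auto
  have "3 \<le> p" by (rule three_le_p)
  also have "p \<le> p ^ e" using e_pos three_le_p by (simp add: self_le_power)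
  also have "p ^ e \<le> N" unfolding N_def using \<open>0 < M\<close> by simp
  finally show ?thesis .
qed

lemma N_pos: "0 < N"
  using three_le_N by simp

lemma N_dvd_iff: "N dvd x \<longleftrightarrow> p ^ e dvd x \<and> M dvd x"
  unfolding N_def using coprime_p_M
  by (auto intro: divides_mult dvd_mult_left dvd_mult_right)

lemma p_power_e: "p ^ e = p * p ^ (e - 1)"
  using e_pos by (simp add: power_eq_if)

lemma p_power_dvd_N: "p ^ (e - 1) dvd N"
  unfolding N_def p_power_e by simp

lemma N_dvd_geom_sum_iff: "N dvd geom_sum u k \<longleftrightarrow> N dvd k"
proof -
  have "p ^ e dvd geom_sum u k \<longleftrightarrow> p ^ e dvd k"
    unfolding u_def d_def using prime_power_dvd_geom_sum_iff[OF prime odd] by simp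
  moreover have "geom_sum u k mod M = k mod M"
    unfolding u_def d_def using M_dvd_W by (intro geom_sum_mod) simp
  then have "M dvd geom_sum u k \<longleftrightarrow> M dvd k" by (simp add: dvd_eq_mod_eq_0)
  ultimately show ?thesis using N_dvd_iff by blast
qed

lemma N_dvd_d_geom_sum:
  assumes "p ^ (e - 1) dvd k" shows "N dvd d * geom_sum u k"
proof -
  have "p ^ (e - 1) dvd geom_sum u k"
    unfolding u_def d_def using prime_power_dvd_geom_sum_iff[OF prime odd] assms by simp
  then have "p ^ e dvd d * geom_sum u k"
    unfolding d_def p_power_e by (simp add: mult.assoc mult_dvd_mono)
  moreover have "M dvd d * geom_sum u k"
    using M_dvd_W by (simp add: d_def)
  ultimately show ?thesis using N_dvd_iff by blast
qed

lemma u_power_eq: "u ^ k = 1 + d * geom_sum u k"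
  unfolding u_def by (rule one_plus_power_eq)

lemma u_power_cong_one:
  assumes "p ^ (e - 1) dvd k" shows "[u ^ k = 1] (mod N)"
proof -
  obtain r where "d * geom_sum u k = N * r"
    using N_dvd_d_geom_sum[OF assms] ..
  then have "u ^ k = 1 + N * r"
    using u_power_eq by simp
  then show ?thesis by (simp only: cong_def mod_mult_self2)
qed

lemma geom_sum_mod_N: "geom_sum u (k mod N) mod N = geom_sum u k mod N"
proof -
  have "[geom_sum u (N * (k div N)) = 0] (mod N)"
    using N_dvd_geom_sum_iff by (simp add: cong_0_iff)
  moreover have "[u ^ (N * (k div N)) = 1] (mod N)"
    using u_power_cong_one p_power_dvd_N by simp
  ultimately have "[geom_sum u (N * (k div N)) + u ^ (N * (k div N)) * geom_sum u (k mod N)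
      = 0 + 1 * geom_sum u (k mod N)] (mod N)"
    by (intro cong_add cong_mult cong_refl)
  then show ?thesis
    using geom_sum_add[of u "N * (k div N)" "k mod N"] by (simp add: cong_def)
qed

lemma geom_sum_add_mod:
  "[geom_sum u ((x + y) mod N) = geom_sum u x + u ^ x * geom_sum u y] (mod N)"
  using geom_sum_mod_N[of "x + y"] geom_sum_add[of u x y] by (simp add: cong_def)

lemma coprime_u_N: "coprime u N"
proof -
  have "coprime u d" unfolding u_def by simp
  moreover have "p dvd d" "M dvd d"
    using M_dvd_W by (simp_all add: d_def)
  ultimately have "coprime u p" "coprime u M"
    using coprime_divisors[OF dvd_refl] by blast+
  then show ?thesis unfolding N_def by simp
qed

lemma coprime_g_N: "coprime g N"
  unfolding g_def using coprime_diff_one_left_nat[OF N_pos] coprime_u_N by simp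

lemma g_plus_u: "g + u = N * u"
  unfolding g_def using N_pos by (simp add: algebra_simps)

lemma eq_of_geom_sum_cong_le:
  assumes "a \<le> b" "b < N" "[geom_sum u a = geom_sum u b] (mod N)"
  shows "a = b"
proof -
  have "[geom_sum u a + 0 = geom_sum u a + u ^ a * geom_sum u (b - a)] (mod N)"
    using assms geom_sum_add[of u a "b - a"] by simp
  then have "[u ^ a * geom_sum u (b - a) = 0] (mod N)"
    using cong_add_lcancel_nat cong_sym by blast
  then have "N dvd u ^ a * geom_sum u (b - a)"
    by (simp add: cong_0_iff)
  then have "N dvd b - a"
    using coprime_u_N N_dvd_geom_sum_iff by (simp add: coprime_dvd_mult_right_iff ac_simps)
  then have "(b - a) mod N = 0" by simp
  moreover have "(b - a) mod N = b - a" using assms(2) by simp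
  ultimately show ?thesis using assms(1) by simp
qed

lemma eq_of_geom_sum_cong:
  assumes "x < N" "y < N" "[geom_sum u x = geom_sum u y] (mod N)"
  shows "x = y"
proof (cases "x \<le> y")
  case True
  then show ?thesis using eq_of_geom_sum_cong_le assms by blast
next
  case False
  then show ?thesis using eq_of_geom_sum_cong_le[of y x] assms(1) cong_sym[OF assms(3)] by simp
qed

lemma bij_geom_sum_mod: "bij_betw (\<lambda>k. geom_sum u k mod N) {0..<N} {0..<N}"
proof -
  have "inj_on (\<lambda>k. geom_sum u k mod N) {0..<N}"
  proof (rule inj_onI)
    fix x y assume "x \<in> {0..<N}" "y \<in> {0..<N}" "geom_sum u x mod N = geom_sum u y mod N"
    then show "x = y" by (intro eq_of_geom_sum_cong) (simp_all add: cong_def)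
  qed
  moreover have "(\<lambda>k. geom_sum u k mod N) ` {0..<N} \<subseteq> {0..<N}"
    using N_pos by auto
  ultimately show ?thesis
    by (simp add: bij_betw_def endo_inj_surj)
qed

lemma mod_N_in_image_geom_sum: "y mod N \<in> (\<lambda>k. geom_sum u k mod N) ` {0..<N}"
  using bij_geom_sum_mod N_pos by (simp add: bij_betw_def)

lemma phi_less: "\<phi> x < N"
  using inv_into_into[OF mod_N_in_image_geom_sum] unfolding \<phi>_def by simp

lemma geom_sum_phi: "[geom_sum u (\<phi> x) = g * geom_sum u x] (mod N)"
proof -
  have "geom_sum u (\<phi> x) mod N = g * geom_sum u x mod N"
    unfolding \<phi>_def using mod_N_in_image_geom_sum by (rule f_inv_into_f)
  then show ?thesis by (simp add: cong_def)
qed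

lemma geom_sum_funpow_phi: "[geom_sum u ((\<phi> ^^ j) a) = g ^ j * geom_sum u a] (mod N)"
proof (induction j)
  case (Suc j)
  have "[geom_sum u (\<phi> ((\<phi> ^^ j) a)) = g * geom_sum u ((\<phi> ^^ j) a)] (mod N)"
    by (rule geom_sum_phi)
  also have "[g * geom_sum u ((\<phi> ^^ j) a) = g * (g ^ j * geom_sum u a)] (mod N)"
    using Suc by (rule cong_scalar_left)
  finally show ?case by (simp add: mult.assoc)
qed simp

lemma funpow_phi_less: "a < N \<Longrightarrow> (\<phi> ^^ j) a < N"
  by (cases j) (simp_all add: phi_less)

text \<open>\<open>g \<equiv> -u\<close>, and as \<open>u\<close> has order dividing \<open>p\<^sup>e\<^sup>-\<^sup>1\<close> modulo \<open>N\<close>, the power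
  \<open>g\<^sup>t\<close> with the even exponent \<open>t = p\<^sup>e\<^sup>-\<^sup>1 + 1\<close> is \<open>u\<close>.\<close>

lemma g_power_cong: "[g ^ (p ^ (e - 1) + 1) = u] (mod N)"
proof -
  have "even (p ^ (e - 1) + 1)" using odd by simp
  then obtain h where h: "p ^ (e - 1) + 1 = 2 * h" ..
  have "[(N - 1) ^ 2 = 1] (mod N)"
  proof -
    define k where "k = N - 2"
    then have "N = k + 2" using three_le_N by simp
    then have "(N - 1) ^ 2 = 1 + N * k"
      by (simp add: power2_eq_square algebra_simps)
    then show ?thesis by (simp only: cong_def mod_mult_self2)
  qed
  then have "[((N - 1) ^ 2) ^ h = 1] (mod N)"
    using cong_pow by fastforce
  moreover have "[u ^ p ^ (e - 1) * u = 1 * u] (mod N)"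
    by (rule cong_scalar_right[OF u_power_cong_one[OF dvd_refl]])
  ultimately have "[((N - 1) ^ 2) ^ h * (u ^ p ^ (e - 1) * u) = 1 * (1 * u)] (mod N)"
    by (rule cong_mult)
  moreover have "g ^ (p ^ (e - 1) + 1) = ((N - 1) ^ 2) ^ h * (u ^ p ^ (e - 1) * u)"
  proof -
    have "g ^ (p ^ (e - 1) + 1) = (N - 1) ^ (2 * h) * u ^ (p ^ (e - 1) + 1)"
      unfolding g_def power_mult_distrib h ..
    then show ?thesis by (simp only: power_mult power_add power_one_right)
  qed
  ultimately show ?thesis by (simp only: mult_1_left)
qed

lemma u_power_g_power_cong:
  assumes "c \<le> a + N"
  shows "[u ^ c * g ^ (1 + (a + N - c) * (p ^ (e - 1) + 1)) = g * u ^ a] (mod N)"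
proof -
  define t where "t = p ^ (e - 1) + 1"
  define x where "x = a + N - c"
  have "u ^ c * g ^ (1 + x * t) = u ^ c * (g * (g ^ t) ^ x)"
    by (simp only: power_add power_one_right mult.commute[of x t] power_mult)
  also have "[\<dots> = u ^ c * (g * u ^ x)] (mod N)"
    by (intro cong_scalar_left cong_pow g_power_cong[folded t_def])
  also have "u ^ c * (g * u ^ x) = g * u ^ a * u ^ N"
  proof -
    have "u ^ c * u ^ x = u ^ a * u ^ N"
      using assms by (simp only: power_add[symmetric]) (simp add: x_def)
    then show ?thesis by (simp only: mult.left_commute[of "u ^ c"] mult.assoc)
  qed
  also have "[g * u ^ a * u ^ N = g * u ^ a * 1] (mod N)"
    using u_power_cong_one[OF p_power_dvd_N] by (rule cong_scalar_left)
  finally show ?thesis unfolding t_def x_def by simp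
qed

lemma phi_zero: "\<phi> 0 = 0"
  using eq_of_geom_sum_cong[OF phi_less N_pos] geom_sum_phi[of 0] by simp

lemma inj_on_phi: "inj_on \<phi> {0..<N}"
proof (rule inj_onI)
  fix x y assume xy: "x \<in> {0..<N}" "y \<in> {0..<N}" "\<phi> x = \<phi> y"
  have "[g * geom_sum u x = g * geom_sum u y] (mod N)"
    using geom_sum_phi[of x] geom_sum_phi[of y] xy(3) by (metis cong_sym cong_trans)
  then have "[geom_sum u x = geom_sum u y] (mod N)"
    using cong_mult_lcancel_nat[OF coprime_g_N] by blast
  then show "x = y" using eq_of_geom_sum_cong xy(1,2) by simp
qed

lemma bij_phi: "bij_betw \<phi> {0..<N} {0..<N}"
proof -
  have "\<phi> ` {0..<N} \<subseteq> {0..<N}" using phi_less by auto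
  then show ?thesis using inj_on_phi by (simp add: bij_betw_def endo_inj_surj)
qed

text \<open>In the coordinates \<open>geom_sum u\<close>, addition reads \<open>E(a + b) = E a + u\<^sup>a E b\<close> and
  \<open>\<phi>\<close> is multiplication by \<open>g\<close>; so \<open>\<phi>\<^sup>i\<close> realises the skew rule at \<open>a\<close> as soon as
  \<open>u\<^bsup>\<phi> a\<^esup> g\<^sup>i \<equiv> g u\<^sup>a\<close>, which \<open>u_power_g_power_cong\<close> solves.\<close>

lemma skew_power_phi:
  assumes a: "a < N"
  shows "skew_power N \<phi> a (1 + (a + N - \<phi> a) * (p ^ (e - 1) + 1))"
  unfolding skew_power_def
proof (intro allI impI)
  fix b assume b: "b < N"
  define i where "i = 1 + (a + N - \<phi> a) * (p ^ (e - 1) + 1)"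
  have "[u ^ \<phi> a * g ^ i = g * u ^ a] (mod N)"
    unfolding i_def using phi_less[of a] by (intro u_power_g_power_cong) simp
  then have exchange: "[u ^ \<phi> a * (g ^ i * geom_sum u b) = g * u ^ a * geom_sum u b] (mod N)"
    using cong_scalar_right by (simp only: mult.assoc[symmetric])
  have "[geom_sum u (\<phi> ((a + b) mod N)) = g * geom_sum u ((a + b) mod N)] (mod N)"
    by (rule geom_sum_phi)
  also have "[g * geom_sum u ((a + b) mod N) = g * (geom_sum u a + u ^ a * geom_sum u b)] (mod N)"
    by (intro cong_scalar_left geom_sum_add_mod)
  also have "g * (geom_sum u a + u ^ a * geom_sum u b) = g * geom_sum u a + g * u ^ a * geom_sum u b"
    by (simp add: algebra_simps)
  also have "[g * geom_sum u a + g * u ^ a * geom_sum u b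
      = geom_sum u (\<phi> a) + u ^ \<phi> a * geom_sum u ((\<phi> ^^ i) b)] (mod N)"
    using cong_sym[OF exchange] cong_sym[OF cong_scalar_left[OF geom_sum_funpow_phi]]
    by (intro cong_add cong_sym[OF geom_sum_phi]) (rule cong_trans)
  also have "[geom_sum u (\<phi> a) + u ^ \<phi> a * geom_sum u ((\<phi> ^^ i) b)
      = geom_sum u ((\<phi> a + (\<phi> ^^ i) b) mod N)] (mod N)"
    using geom_sum_add_mod by (rule cong_sym)
  finally show "\<phi> ((a + b) mod N) = (\<phi> a + (\<phi> ^^ i) b) mod N"
    using eq_of_geom_sum_cong phi_less N_pos by simp
qed

lemma skew_morphism_phi: "skew_morphism N \<phi>"
  unfolding skew_morphism_def using bij_phi phi_zero skew_power_phi
  unfolding skew_power_def by blast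

lemma not_p_dvd_1_plus_u: "\<not> p dvd 1 + u"
proof
  assume "p dvd 1 + u"
  then have "p dvd 2 + p * W" by (simp add: u_def d_def)
  then have "p dvd 2" by (metis dvd_add_left_iff dvd_triv_left)
  then show False using three_le_p by (auto dest: dvd_imp_le)
qed

lemma skew_ord_phi_neq_1: "skew_ord N \<phi> \<noteq> 1"
proof
  assume ord: "skew_ord N \<phi> = 1"
  interpret periodic_map N \<phi>
    using phi_less bij_betw_funpow_periodic[OF bij_phi] by unfold_locales
  have "\<phi> 1 = 1" using funpow_skew_ord[of 1] ord three_le_N by simp
  then have "[1 = g] (mod N)" using geom_sum_phi[of 1] by (simp add: geom_sum_def)
  then have "[1 + u = N * u] (mod N)" using cong_add[OF _ cong_refl, of 1 g N u] g_plus_u by simp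
  then have "N dvd 1 + u" by (simp add: cong_def dvd_eq_mod_eq_0)
  then have "p dvd 1 + u"
    using N_dvd_iff e_pos by (meson dvd_power dvd_trans)
  then show False using not_p_dvd_1_plus_u by contradiction
qed

sublocale skew: nontrivial_skew N \<phi>
  using three_le_N skew_morphism_phi skew_ord_phi_neq_1 by unfold_locales simp_all

lemma funpow_phi_additive:
  assumes k: "p ^ (e - 1) dvd k" "k < N" and b: "b < N"
  shows "(\<phi> ^^ j) ((k + b) mod N) = ((\<phi> ^^ j) k + (\<phi> ^^ j) b) mod N"
proof (rule eq_of_geom_sum_cong)
  show "(\<phi> ^^ j) ((k + b) mod N) < N" "((\<phi> ^^ j) k + (\<phi> ^^ j) b) mod N < N"
    using funpow_phi_less N_pos by simp_all
  have "[u ^ k = 1] (mod N)" using u_power_cong_one k(1) .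
  have "[u ^ (\<phi> ^^ j) k = 1] (mod N)"
  proof -
    have "[d * geom_sum u ((\<phi> ^^ j) k) = d * (g ^ j * geom_sum u k)] (mod N)"
      by (intro cong_scalar_left geom_sum_funpow_phi)
    also have "[d * (g ^ j * geom_sum u k) = 0] (mod N)"
      using dvd_mult2[OF N_dvd_d_geom_sum[OF k(1)], of "g ^ j"] by (simp add: cong_0_iff ac_simps)
    finally have "[1 + d * geom_sum u ((\<phi> ^^ j) k) = 1 + 0] (mod N)"
      by (rule cong_add[OF cong_refl])
    then show ?thesis unfolding u_power_eq by simp
  qed
  have "[geom_sum u ((\<phi> ^^ j) ((k + b) mod N)) = g ^ j * geom_sum u ((k + b) mod N)] (mod N)"
    by (rule geom_sum_funpow_phi)
  also have "[g ^ j * geom_sum u ((k + b) mod N)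
      = g ^ j * (geom_sum u k + u ^ k * geom_sum u b)] (mod N)"
    by (intro cong_scalar_left geom_sum_add_mod)
  also have "[g ^ j * (geom_sum u k + u ^ k * geom_sum u b)
      = g ^ j * (geom_sum u k + 1 * geom_sum u b)] (mod N)"
    by (intro cong_scalar_left cong_add cong_refl cong_scalar_right \<open>[u ^ k = 1] (mod N)\<close>)
  also have "g ^ j * (geom_sum u k + 1 * geom_sum u b)
      = g ^ j * geom_sum u k + 1 * (g ^ j * geom_sum u b)"
    by (simp add: algebra_simps)
  also have "[g ^ j * geom_sum u k + 1 * (g ^ j * geom_sum u b)
      = geom_sum u ((\<phi> ^^ j) k) + u ^ (\<phi> ^^ j) k * geom_sum u ((\<phi> ^^ j) b)] (mod N)"
    by (intro cong_add cong_mult cong_sym[OF geom_sum_funpow_phi]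
        cong_sym[OF \<open>[u ^ (\<phi> ^^ j) k = 1] (mod N)\<close>])
  also have "[geom_sum u ((\<phi> ^^ j) k) + u ^ (\<phi> ^^ j) k * geom_sum u ((\<phi> ^^ j) b)
      = geom_sum u (((\<phi> ^^ j) k + (\<phi> ^^ j) b) mod N)] (mod N)"
    using geom_sum_add_mod by (rule cong_sym)
  finally show "[geom_sum u ((\<phi> ^^ j) ((k + b) mod N))
      = geom_sum u (((\<phi> ^^ j) k + (\<phi> ^^ j) b) mod N)] (mod N)" .
qed

lemma u_power_cong_u_power_phi:
  assumes "\<phi> ((k + 1) mod N) = (\<phi> k + \<phi> 1) mod N"
  shows "[u ^ k = u ^ \<phi> k] (mod N)"
proof -
  have E1: "geom_sum u 1 = 1" by (simp add: geom_sum_def)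
  have "[geom_sum u (\<phi> ((k + 1) mod N)) = g * (geom_sum u k + u ^ k * geom_sum u 1)] (mod N)"
    using geom_sum_phi cong_scalar_left[OF geom_sum_add_mod] by (rule cong_trans)
  moreover have "[geom_sum u ((\<phi> k + \<phi> 1) mod N)
      = g * geom_sum u k + u ^ \<phi> k * (g * geom_sum u 1)] (mod N)"
    using geom_sum_add_mod cong_add[OF geom_sum_phi cong_scalar_left[OF geom_sum_phi]]
    by (rule cong_trans)
  ultimately have "[g * (geom_sum u k + u ^ k * geom_sum u 1)
      = g * geom_sum u k + u ^ \<phi> k * (g * geom_sum u 1)] (mod N)"
    unfolding assms using cong_sym cong_trans by blast
  then have "[g * geom_sum u k + g * u ^ k = g * geom_sum u k + g * u ^ \<phi> k] (mod N)"
    unfolding E1 by (simp add: algebra_simps)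
  then have "[g * u ^ k = g * u ^ \<phi> k] (mod N)"
    by (rule cong_add_lcancel_nat[THEN iffD1])
  then show ?thesis using cong_mult_lcancel_nat[OF coprime_g_N] by blast
qed

lemma dvd_of_phi_additive:
  assumes "\<phi> ((k + 1) mod N) = (\<phi> k + \<phi> 1) mod N"
  shows "p ^ (e - 1) dvd k"
proof -
  have "[1 + d * geom_sum u k = 1 + d * geom_sum u (\<phi> k)] (mod N)"
    using u_power_cong_u_power_phi[OF assms] unfolding u_power_eq .
  then have "[d * geom_sum u k = d * geom_sum u (\<phi> k)] (mod N)"
    by (rule cong_add_lcancel_nat[THEN iffD1])
  also have "[d * geom_sum u (\<phi> k) = d * (g * geom_sum u k)] (mod N)"
    by (intro cong_scalar_left geom_sum_phi)
  finally have "[d * geom_sum u k = d * geom_sum u k * g] (mod N)"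
    by (simp only: ac_simps)
  then have "[d * geom_sum u k + d * geom_sum u k * u
      = d * geom_sum u k * g + d * geom_sum u k * u] (mod N)"
    by (intro cong_add cong_refl)
  then have "[d * geom_sum u k * (1 + u) = d * geom_sum u k * (g + u)] (mod N)"
    by (simp only: distrib_left mult_1_right)
  \<comment> \<open>as \<open>g \<equiv> -u\<close>, the right-hand side vanishes modulo \<open>N\<close>\<close>
  also have "d * geom_sum u k * (g + u) = N * (u * d * geom_sum u k)"
    unfolding g_plus_u by (simp only: ac_simps)
  finally have "N dvd d * geom_sum u k * (1 + u)"
    by (simp add: cong_def dvd_eq_mod_eq_0)
  then have "p ^ e dvd d * geom_sum u k * (1 + u)"
    using N_dvd_iff by blast
  then have "p * p ^ (e - 1) dvd p * (geom_sum u k * (W * (1 + u)))"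
    unfolding p_power_e d_def by (simp only: ac_simps)
  then have "p ^ (e - 1) dvd geom_sum u k * (W * (1 + u))"
    using three_le_p by simp
  moreover have "coprime (p ^ (e - 1)) (W * (1 + u))"
    using prime_imp_coprime[OF prime not_p_dvd_W] prime_imp_coprime[OF prime not_p_dvd_1_plus_u]
    by (simp only: coprime_power_left_iff coprime_mult_right_iff) blast
  ultimately have "p ^ (e - 1) dvd geom_sum u k"
    by (simp add: coprime_dvd_mult_left_iff)
  then show ?thesis
    unfolding u_def d_def using prime_power_dvd_geom_sum_iff[OF prime odd] by simp
qed

lemma powers_additive_at_iff_dvd:
  assumes "k < N" shows "skew.powers_additive_at k \<longleftrightarrow> p ^ (e - 1) dvd k"
proof
  assume additive: "skew.powers_additive_at k"
  have "1 < skew.m" "1 < N" using skew.two_le_m three_le_N by simp_all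
  then have "(\<phi> ^^ 1) ((k + 1) mod N) = ((\<phi> ^^ 1) k + (\<phi> ^^ 1) 1) mod N"
    using additive unfolding skew.powers_additive_at_def by blast
  then show "p ^ (e - 1) dvd k" using dvd_of_phi_additive by simp
next
  assume "p ^ (e - 1) dvd k"
  then show "skew.powers_additive_at k"
    unfolding skew.powers_additive_at_def using funpow_phi_additive assms by blast
qed

lemma skew_ord_derived: "skew.m' = p ^ (e - 1)"
proof -
  have "(\<forall>j<skew.m. (skew.\<psi> ^^ k) j = j) \<longleftrightarrow> p ^ (e - 1) dvd k" for k
    using skew.funpow_psi_fixes_iff_powers_additive_at powers_additive_at_iff_dvd[of "k mod N"]
      N_pos dvd_mod_iff[OF p_power_dvd_N]
    by simp
  then have "skew.m' = (LEAST k. 0 < k \<and> p ^ (e - 1) dvd k)"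
    unfolding skew_ord_def by simp
  also have "\<dots> = p ^ (e - 1)"
    using three_le_p by (intro Least_equality) (auto dest: dvd_imp_le)
  finally show ?thesis .
qed

definition "\<chi> i = skew_sigma skew.m skew.\<psi> i (1 mod skew.m)"

lemma derived_derived_phi: "derived (derived (N, \<phi>)) = (p ^ (e - 1), \<chi>)"
  using skew.derived_derived skew_ord_derived unfolding \<chi>_def by simp

lemma chi_zero: "\<chi> 0 = 0"
  unfolding \<chi>_def skew_sigma_def by simp

lemma chi_eq: "i < p ^ (e - 1) \<Longrightarrow> \<chi> i = \<phi> i mod p ^ (e - 1)"
  using skew.second_derived_apply skew_ord_derived unfolding \<chi>_def by simp

lemma geom_family_pred: "1 < e \<Longrightarrow> geom_family p (e - 1) 1 W"
  using prime odd not_p_dvd_W by unfold_locales auto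

lemma phi_mod_eq_pred:
  assumes "1 < e" and "a < p ^ (e - 1)"
  shows "\<phi> a mod p ^ (e - 1) = geom_family.\<phi> p (e - 1) 1 W a"
proof -
  interpret pred: geom_family p "e - 1" 1 W by (rule geom_family_pred[OF assms(1)])
  have N: "pred.N = p ^ (e - 1)" unfolding pred.N_def by simp
  have u: "pred.u = u" unfolding pred.u_def pred.d_def u_def d_def ..
  have "[g + u = pred.g + u] (mod p ^ (e - 1))"
    using g_plus_u pred.g_plus_u p_power_dvd_N N u by (simp add: cong_def)
  then have g: "[g = pred.g] (mod p ^ (e - 1))" by (simp add: cong_add_rcancel_nat)
  have "[geom_sum u (\<phi> a mod p ^ (e - 1)) = geom_sum u (\<phi> a)] (mod p ^ (e - 1))"
    using pred.geom_sum_mod_N N u by (simp add: cong_def)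
  also have "[geom_sum u (\<phi> a) = g * geom_sum u a] (mod p ^ (e - 1))"
    using geom_sum_phi p_power_dvd_N by (rule cong_dvd_modulus_nat)
  also have "[g * geom_sum u a = pred.g * geom_sum u a] (mod p ^ (e - 1))"
    using g by (rule cong_scalar_right)
  also have "[pred.g * geom_sum u a = geom_sum u (pred.\<phi> a)] (mod p ^ (e - 1))"
    using pred.geom_sum_phi N u by (simp add: cong_sym_eq)
  finally show ?thesis
    using pred.eq_of_geom_sum_cong pred.phi_less pred.N_pos N u by simp
qed

lemma funpow_derived_Suc_Suc: "(derived ^^ Suc (Suc c)) (N, \<phi>) = (derived ^^ c) (p ^ (e - 1), \<chi>)"
  using derived_derived_phi by (simp only: funpow_Suc_right comp_apply)

lemma funpow_derived_chi_eq_pred: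
  assumes "1 < e" and "0 < c"
  shows "(derived ^^ c) (p ^ (e - 1), \<chi>)
    = (derived ^^ c) (geom_family.N p (e - 1) 1, geom_family.\<phi> p (e - 1) 1 W)"
proof -
  interpret pred: geom_family p "e - 1" 1 W by (rule geom_family_pred[OF assms(1)])
  have N: "pred.N = p ^ (e - 1)" unfolding pred.N_def by simp
  have "derived (p ^ (e - 1), \<chi>) = derived (p ^ (e - 1), pred.\<phi>)"
    using chi_eq phi_mod_eq_pred[OF assms(1)] pred.phi_less N pred.N_pos
    by (intro derived_cong) simp_all
  then show ?thesis
    using assms(2) N by (cases c) (simp_all only: funpow_Suc_right comp_apply)
qed

end

lemma fst_funpow_derived_geom_family:
  assumes "geom_family p e M W"
  shows "(c < 2 * e \<longrightarrow> 2 \<le> fst ((derived ^^ c) (geom_family.N p e M, geom_family.\<phi> p e M W)))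
    \<and> (2 * e \<le> c \<longrightarrow> fst ((derived ^^ c) (geom_family.N p e M, geom_family.\<phi> p e M W)) = 1)"
  using assms
proof (induction e arbitrary: M W c)
  case 0
  then show ?case using geom_family.e_pos by blast
next
  case (Suc e)
  interpret geom_family p "Suc e" M W by (rule Suc.prems)
  consider "c = 0" | "c = 1" | c' where "c = Suc (Suc c')" by (metis One_nat_def not0_implies_Suc)
  then show ?case
  proof cases
    case 1
    then show ?thesis using three_le_N by simp
  next
    case 2
    then show ?thesis using skew.two_le_m by (simp add: derived_apply)
  next
    case 3
    then have c: "(derived ^^ c) (N, \<phi>) = (derived ^^ c') (p ^ e, \<chi>)"
      using funpow_derived_Suc_Suc by simp
    show ?thesis
    proof (cases "e = 0")
      case True
      then show ?thesis using c 3 fst_funpow_derived_one chi_zero by simp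
    next
      case False
      show ?thesis
      proof (cases "c' = 0")
        case True
        have "p \<le> p ^ e" using False three_le_p by (simp add: self_le_power)
        then show ?thesis using c 3 True False three_le_p by simp
      next
        case c'_pos: False
        then have "(derived ^^ c) (N, \<phi>)
            = (derived ^^ c') (geom_family.N p e 1, geom_family.\<phi> p e 1 W)"
          using c funpow_derived_chi_eq_pred[of c'] False by simp
        moreover have "geom_family p e 1 W"
          using geom_family_pred False by simp
        ultimately show ?thesis
          using Suc.IH[of 1 W c'] 3 by simp
      qed
    qed
  qed
qed

lemma skew_complexity_geom_family:
  assumes "geom_family p e M W"
  shows "skew_complexity (geom_family.N p e M) (geom_family.\<phi> p e M W) = 2 * e - 1"
proof -
  interpret geom_family p e M W by (rule assms)
  let ?F = "\<lambda>c. fst ((derived ^^ c) (N, \<phi>))"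
  have F: "(c < 2 * e \<longrightarrow> 2 \<le> ?F c) \<and> (2 * e \<le> c \<longrightarrow> ?F c = 1)" for c
    using fst_funpow_derived_geom_family[OF assms] by simp
  show ?thesis
    unfolding skew_complexity_def
  proof (rule the_equality)
    show "2 \<le> ?F (2 * e - 1) \<and> ?F (Suc (2 * e - 1)) = 1"
      using F[of "2 * e - 1"] F[of "Suc (2 * e - 1)"] e_pos by simp
  next
    fix c assume c: "2 \<le> ?F c \<and> ?F (Suc c) = 1"
    then have "c < 2 * e" using F[of c] by (cases "c < 2 * e") auto
    moreover have "\<not> Suc c < 2 * e" using F[of "Suc c"] c by auto
    ultimately show "c = 2 * e - 1" by simp
  qed
qed

lemma geom_family_of_prime_cube_dvd:
  fixes n p :: nat
  assumes "n \<noteq> 0" "prime p" "odd p" "p ^ 3 dvd n"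
  obtains e M where "geom_family p e M M" "geom_family.N p e M = n" "3 \<le> e"
proof -
  have "\<not> is_unit p" using assms(2) by auto
  define e where "e = multiplicity p n"
  have "3 \<le> e" unfolding e_def using multiplicity_geI[OF assms(1) \<open>\<not> is_unit p\<close> assms(4)] .
  obtain M where M: "n = p ^ e * M" "\<not> p dvd M"
    unfolding e_def by (rule multiplicity_decompose'[OF assms(1) \<open>\<not> is_unit p\<close>])
  have "geom_family p e M M"
    using assms(2,3) \<open>3 \<le> e\<close> M(2) by unfold_locales (auto simp: prime_imp_coprime)
  moreover have "geom_family.N p e M = n"
    using M(1) by (simp add: geom_family.N_def[OF \<open>geom_family p e M M\<close>])
  ultimately show ?thesis using that \<open>3 \<le> e\<close> by blast
qed

theorem corollary6p4:
  fixes n p :: nat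
  assumes "n \<ge> 2"
    and "Comp n \<subseteq> {0, 1, 2, 3}"
    and "prime p" and "odd p"
  shows "\<not> p ^ 3 dvd n"
proof
  assume "p ^ 3 dvd n"
  moreover have "n \<noteq> 0" using assms(1) by simp
  ultimately obtain e M where fam: "geom_family p e M M" and N: "geom_family.N p e M = n" and "3 \<le> e"
    using geom_family_of_prime_cube_dvd assms(3,4) by blast
  have "skew_complexity n (geom_family.\<phi> p e M M) \<in> Comp n"
    unfolding Comp_def using geom_family.skew_morphism_phi[OF fam] N by auto
  moreover have "skew_complexity n (geom_family.\<phi> p e M M) = 2 * e - 1"
    using skew_complexity_geom_family[OF fam] N by simp
  ultimately show False using assms(2) \<open>3 \<le> e\<close> by auto
qed

end
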